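(* Let $\mathcal A$ be a cluster algebra and let $\mathcal A(\Sigma_1)\supsetneq\mathcal A(\Sigma_2)\supsetneq\cdots\supsetneq\mathcal A(\Sigma_s)$ be a strictly descending sequence of Galois-like extension subalgebras of $\mathcal A$. Then $\mathrm{Gal}_{\Sigma_1}\mathcal A<\mathrm{Gal}_{\Sigma_2}\mathcal A<\cdots<\mathrm{Gal}_{\Sigma_s}\mathcal A$ is a strictly ascending sequence of subgroups of $\mathrm{Aut}\,\mathcal A$.
   Context: $\mathrm{Aut}\,\mathcal A$: group of cluster automorphisms. Cluster subalgebras $\mathcal A(\Sigma')$ arise from mixing-type sub-seeds of seeds of $\mathcal A$. $\mathrm{Gal}_{\Sigma'}\mathcal A=\{f\in\mathrm{Aut}\,\mathcal A: f|_{\mathcal A(\Sigma')}=\mathrm{id}\}$; $\mathcal A^H=\{z\in\mathcal A: f(z)=z\ \forall f\in H\}$; $\mathcal M^H_{sub}$ is the set of cluster subalgebras $\mathcal A(\Sigma')$ maximal (under inclusion) among cluster subalgebras contained in $\mathcal A^H$ and satisfying $\mathrm{Gal}_{\Sigma'}\mathcal A=H$. A cluster subalgebra is a Galois-like extension subalgebra if it belongs to $\mathcal M^H_{sub}$ for some $H\le\mathrm{Aut}\,\mathcal A$ (necessarily $H=\mathrm{Gal}_{\Sigma'}\mathcal A$). *)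

theory Defs
  imports "HOL-Algebra.Group"
begin

(* Abstract rendering of the data of a cluster algebra A needed for the statement:
   - A       : the carrier of the cluster algebra A (a set of elements of type 'a)
   - Aut     : the cluster automorphisms of A, as maps A -> A (extensional on A)
   - Sub     : the mixing-type sub-seeds of seeds of A
   - CA      : CA sig = the cluster subalgebra A(sig) generated by a sub-seed sig. *)

definition aut_group :: "'a set \<Rightarrow> ('a \<Rightarrow> 'a) set \<Rightarrow> ('a \<Rightarrow> 'a) monoid" where
  "aut_group A Aut = \<lparr>carrier = Aut, mult = (\<lambda>f g. restrict (f \<circ> g) A), one = restrict id A\<rparr>"

definition cluster_setting ::
  "'a set \<Rightarrow> ('a \<Rightarrow> 'a) set \<Rightarrow> 's set \<Rightarrow> ('s \<Rightarrow> 'a set) \<Rightarrow> bool" where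
  "cluster_setting A Aut Sub CA \<longleftrightarrow>
     (\<forall>f\<in>Aut. f \<in> extensional A \<and> bij_betw f A A) \<and>
     group (aut_group A Aut) \<and>
     (\<forall>\<sigma>\<in>Sub. CA \<sigma> \<subseteq> A)"

definition Gal :: "('a \<Rightarrow> 'a) set \<Rightarrow> ('s \<Rightarrow> 'a set) \<Rightarrow> 's \<Rightarrow> ('a \<Rightarrow> 'a) set" where
  "Gal Aut CA \<sigma> = {f \<in> Aut. \<forall>z\<in>CA \<sigma>. f z = z}"

definition fixed_sub :: "'a set \<Rightarrow> ('a \<Rightarrow> 'a) set \<Rightarrow> 'a set" where
  "fixed_sub A H = {z \<in> A. \<forall>f\<in>H. f z = z}"

definition M_sub ::
  "'a set \<Rightarrow> ('a \<Rightarrow> 'a) set \<Rightarrow> 's set \<Rightarrow> ('s \<Rightarrow> 'a set) \<Rightarrow> ('a \<Rightarrow> 'a) set \<Rightarrow> 'a set set" where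
  "M_sub A Aut Sub CA H =
     {CA \<sigma> | \<sigma>. \<sigma> \<in> Sub \<and> CA \<sigma> \<subseteq> fixed_sub A H \<and> Gal Aut CA \<sigma> = H \<and>
        (\<forall>\<tau>\<in>Sub. CA \<tau> \<subseteq> fixed_sub A H \<and> Gal Aut CA \<tau> = H \<and> CA \<sigma> \<subseteq> CA \<tau>
              \<longrightarrow> CA \<tau> = CA \<sigma>)}"

definition galois_like ::
  "'a set \<Rightarrow> ('a \<Rightarrow> 'a) set \<Rightarrow> 's set \<Rightarrow> ('s \<Rightarrow> 'a set) \<Rightarrow> 's \<Rightarrow> bool" where
  "galois_like A Aut Sub CA \<sigma> \<longleftrightarrow>
     (\<exists>H. subgroup H (aut_group A Aut) \<and> CA \<sigma> \<in> M_sub A Aut Sub CA H)"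

end

theory Submission
  imports Defs
begin

text \<open>Fixing the larger subalgebra is a stronger condition, so the Galois groups reverse
  inclusion. Strictness comes from maximality: if a Galois-like \<open>\<A>(\<Sigma>)\<close> sat inside a larger
  \<open>\<A>(\<Sigma>')\<close> with the same Galois group \<open>H\<close>, then \<open>\<A>(\<Sigma>')\<close> would also lie in \<open>\<A>\<^sup>H\<close> and
  contradict the maximality of \<open>\<A>(\<Sigma>)\<close> in \<open>\<M>\<^sup>H\<^sub>s\<^sub>u\<^sub>b\<close>.\<close>

lemma cluster_setting_subalgebra:
  "cluster_setting A Aut Sub CA \<Longrightarrow> \<sigma> \<in> Sub \<Longrightarrow> CA \<sigma> \<subseteq> A"
  by (simp add: cluster_setting_def)

lemma Gal_cong: "CA \<sigma> = CA \<tau> \<Longrightarrow> Gal Aut CA \<sigma> = Gal Aut CA \<tau>"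
  by (simp add: Gal_def)

lemma Gal_antimono: "CA \<sigma> \<subseteq> CA \<tau> \<Longrightarrow> Gal Aut CA \<tau> \<subseteq> Gal Aut CA \<sigma>"
  unfolding Gal_def by blast

lemma subset_fixed_sub_Gal: "CA \<sigma> \<subseteq> A \<Longrightarrow> CA \<sigma> \<subseteq> fixed_sub A (Gal Aut CA \<sigma>)"
  unfolding fixed_sub_def Gal_def by blast

lemma M_subE:
  assumes "X \<in> M_sub A Aut Sub CA H"
  obtains \<sigma> where "X = CA \<sigma>" and "Gal Aut CA \<sigma> = H"
    and "\<And>\<tau>. \<lbrakk>\<tau> \<in> Sub; CA \<tau> \<subseteq> fixed_sub A H; Gal Aut CA \<tau> = H; CA \<sigma> \<subseteq> CA \<tau>\<rbrakk>
           \<Longrightarrow> CA \<tau> = CA \<sigma>"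
  using assms unfolding M_sub_def by auto

text \<open>The group \<open>H\<close> witnessing Galois-likeness is forced to be \<open>Gal\<^sub>\<Sigma> \<A>\<close>.\<close>

lemma galois_likeE:
  assumes "galois_like A Aut Sub CA \<sigma>"
  obtains "subgroup (Gal Aut CA \<sigma>) (aut_group A Aut)"
    and "\<And>\<tau>. \<lbrakk>\<tau> \<in> Sub; CA \<tau> \<subseteq> fixed_sub A (Gal Aut CA \<sigma>);
              Gal Aut CA \<tau> = Gal Aut CA \<sigma>; CA \<sigma> \<subseteq> CA \<tau>\<rbrakk> \<Longrightarrow> CA \<tau> = CA \<sigma>"
proof -
  obtain H where H: "subgroup H (aut_group A Aut)" and mem: "CA \<sigma> \<in> M_sub A Aut Sub CA H"
    using assms unfolding galois_like_def by blast
  from mem obtain \<sigma>' where \<sigma>': "CA \<sigma> = CA \<sigma>'" "Gal Aut CA \<sigma>' = H"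
    and max: "\<And>\<tau>. \<lbrakk>\<tau> \<in> Sub; CA \<tau> \<subseteq> fixed_sub A H; Gal Aut CA \<tau> = H; CA \<sigma>' \<subseteq> CA \<tau>\<rbrakk>
                \<Longrightarrow> CA \<tau> = CA \<sigma>'"
    by (rule M_subE) blast
  have "Gal Aut CA \<sigma> = H"
    using \<sigma>' Gal_cong by metis
  with H \<sigma>'(1) max show thesis
    by (intro that) auto
qed

lemma Gal_strict_antimono:
  assumes "galois_like A Aut Sub CA \<sigma>" and "\<tau> \<in> Sub" and "CA \<tau> \<subseteq> A"
    and "CA \<sigma> \<subset> CA \<tau>"
  shows "Gal Aut CA \<tau> \<subset> Gal Aut CA \<sigma>"
proof -
  have le: "Gal Aut CA \<tau> \<subseteq> Gal Aut CA \<sigma>"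
    using assms(4) by (intro Gal_antimono) blast
  have "Gal Aut CA \<tau> \<noteq> Gal Aut CA \<sigma>"
  proof
    assume eq: "Gal Aut CA \<tau> = Gal Aut CA \<sigma>"
    have "CA \<tau> \<subseteq> fixed_sub A (Gal Aut CA \<sigma>)"
      using subset_fixed_sub_Gal[of CA \<tau> A Aut] assms(3) eq by simp
    moreover have "CA \<sigma> \<subseteq> CA \<tau>"
      using assms(4) by blast
    ultimately have "CA \<tau> = CA \<sigma>"
      using assms(1,2) eq by (elim galois_likeE) blast
    with assms(4) show False
      by simp
  qed
  with le show ?thesis
    by blast
qed

theorem mainTheorem12:
  fixes A :: "'a set" and Aut :: "('a \<Rightarrow> 'a) set" and Sub :: "'s set"
    and CA :: "'s \<Rightarrow> 'a set" and \<Sigma> :: "nat \<Rightarrow> 's" and s :: nat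
  assumes "cluster_setting A Aut Sub CA"
    and "\<forall>i<s. \<Sigma> i \<in> Sub \<and> galois_like A Aut Sub CA (\<Sigma> i)"
    and "\<forall>i. Suc i < s \<longrightarrow> CA (\<Sigma> (Suc i)) \<subset> CA (\<Sigma> i)"
  shows "(\<forall>i<s. subgroup (Gal Aut CA (\<Sigma> i)) (aut_group A Aut)) \<and>
         (\<forall>i. Suc i < s \<longrightarrow> Gal Aut CA (\<Sigma> i) \<subset> Gal Aut CA (\<Sigma> (Suc i)))"
proof (intro conjI allI impI)
  fix i assume "i < s"
  then have "galois_like A Aut Sub CA (\<Sigma> i)"
    using assms(2) by simp
  then show "subgroup (Gal Aut CA (\<Sigma> i)) (aut_group A Aut)"
    by (rule galois_likeE)
next
  fix i assume i: "Suc i < s"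
  then have "galois_like A Aut Sub CA (\<Sigma> (Suc i))" and "\<Sigma> i \<in> Sub"
    using assms(2) by (simp_all add: Suc_lessD)
  moreover have "CA (\<Sigma> i) \<subseteq> A"
    using assms(1) \<open>\<Sigma> i \<in> Sub\<close> by (rule cluster_setting_subalgebra)
  moreover have "CA (\<Sigma> (Suc i)) \<subset> CA (\<Sigma> i)"
    using assms(3) i by simp
  ultimately show "Gal Aut CA (\<Sigma> i) \<subset> Gal Aut CA (\<Sigma> (Suc i))"
    by (rule Gal_strict_antimono)
qed

end
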